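(* Let $n\ge3$, $K\ge1$, and $\underline a=(a_1,\dots,a_K)\in(\mathbb{C}^\times)^K$ with $a_k\neq a_j^{\pm1}$ for all $k\neq j$. If $a_k\neq\pm1$ for every $k$, then $\psi_{\underline a}:\mathrm{gim}(M_n)\to sl_{2n}^{\oplus K}$ is surjective.
   Context: For $n\geq 3$, $M_n=(m_{i,j})$ is the $n\times n$ integer matrix with $m_{i,i}=2$, $m_{i,i+1}=m_{i+1,i}=-1$ ($1\le i\le n-1$), $m_{1,n}=m_{n,1}=1$, all other entries $0$. $\mathrm{gim}(M_n)$ is the complex Lie algebra generated by $e_i,f_i,h_i$ ($1\le i\le n$) with relations: (R1) $[h_i,e_j]=m_{i,j}e_j$, $[h_i,f_j]=-m_{i,j}f_j$, $[e_i,f_i]=h_i$ for all $i,j$; (R2) for $i\ne j$ with $m_{i,j}\le0$: $[e_i,f_j]=0=[f_i,e_j]$, $(\mathrm{ad}\,e_i)^{1-m_{i,j}}e_j=0=(\mathrm{ad}\,f_i)^{1-m_{i,j}}f_j$; (R3) for $i\ne j$ with $m_{i,j}>0$: $[e_i,e_j]=0=[f_i,f_j]$, $(\mathrm{ad}\,e_i)^{m_{i,j}+1}f_j=0=(\mathrm{ad}\,f_i)^{m_{i,j}+1}e_j$. For $a\in\mathbb{C}^\times$, $\psi_a:\mathrm{gim}(M_n)\to sl_{2n}$ is the Lie algebra homomorphism determined by $\psi_a(e_i)=E_{i,i+1}-E_{n+i+1,n+i}$, $\psi_a(f_i)=E_{i+1,i}-E_{n+i,n+i+1}$ ($1\le i\le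 n-1$), $\psi_a(e_n)=E_{n,n+1}+a^{-1}E_{1,2n}$, $\psi_a(f_n)=E_{n+1,n}+aE_{2n,1}$, where $E_{i,j}$ are matrix units. For $\underline a=(a_1,\dots,a_K)$, $\psi_{\underline a}=\bigoplus_{k=1}^K\psi_{a_k}:\mathrm{gim}(M_n)\to sl_{2n}^{\oplus K}$, $x\mapsto(\psi_{a_1}(x),\dots,\psi_{a_K}(x))$. *)

theory Defs
  imports Complex_Main "HOL-Library.Function_Algebras"
begin

definition lie_algebra :: "(complex \<Rightarrow> 'a::ab_group_add \<Rightarrow> 'a) \<Rightarrow> ('a \<Rightarrow> 'a \<Rightarrow> 'a) \<Rightarrow> bool" where
  "lie_algebra sc br \<longleftrightarrow> module sc
     \<and> (\<forall>x y z. br (x + y) z = br x z + br y z)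
     \<and> (\<forall>x y z. br x (y + z) = br x y + br x z)
     \<and> (\<forall>c x y. br (sc c x) y = sc c (br x y))
     \<and> (\<forall>c x y. br x (sc c y) = sc c (br x y))
     \<and> (\<forall>x. br x x = 0)
     \<and> (\<forall>x y z. br x (br y z) + br y (br z x) + br z (br x y) = 0)"

definition lie_generated :: "(complex \<Rightarrow> 'a::ab_group_add \<Rightarrow> 'a) \<Rightarrow> ('a \<Rightarrow> 'a \<Rightarrow> 'a) \<Rightarrow> 'a set \<Rightarrow> 'a set" where
  "lie_generated sc br S = \<Inter>{V. S \<subseteq> V \<and> 0 \<in> V \<and> (\<forall>x\<in>V. \<forall>y\<in>V. x + y \<in> V)
      \<and> (\<forall>c. \<forall>x\<in>V. sc c x \<in> V) \<and> (\<forall>x\<in>V. \<forall>y\<in>V. br x y \<in> V)}"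

definition Mn :: "nat \<Rightarrow> nat \<Rightarrow> nat \<Rightarrow> int" where
  "Mn n i j = (if i = j then 2
     else if j = i + 1 \<or> i = j + 1 then -1
     else if (i = 1 \<and> j = n) \<or> (i = n \<and> j = 1) then 1 else 0)"

definition gim_relations :: "nat \<Rightarrow> (complex \<Rightarrow> 'a::ab_group_add \<Rightarrow> 'a) \<Rightarrow> ('a \<Rightarrow> 'a \<Rightarrow> 'a)
     \<Rightarrow> (nat \<Rightarrow> 'a) \<Rightarrow> (nat \<Rightarrow> 'a) \<Rightarrow> (nat \<Rightarrow> 'a) \<Rightarrow> bool" where
  "gim_relations n sc br e f h \<longleftrightarrow>
     (\<forall>i\<in>{1..n}. \<forall>j\<in>{1..n}.
        br (h i) (e j) = sc (of_int (Mn n i j)) (e j)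
      \<and> br (h i) (f j) = sc (- of_int (Mn n i j)) (f j))
   \<and> (\<forall>i\<in>{1..n}. br (e i) (f i) = h i)
   \<and> (\<forall>i\<in>{1..n}. \<forall>j\<in>{1..n}. i \<noteq> j \<and> Mn n i j \<le> 0 \<longrightarrow>
        br (e i) (f j) = 0 \<and> br (f i) (e j) = 0
      \<and> (br (e i) ^^ nat (1 - Mn n i j)) (e j) = 0
      \<and> (br (f i) ^^ nat (1 - Mn n i j)) (f j) = 0)
   \<and> (\<forall>i\<in>{1..n}. \<forall>j\<in>{1..n}. i \<noteq> j \<and> Mn n i j > 0 \<longrightarrow>
        br (e i) (e j) = 0 \<and> br (f i) (f j) = 0
      \<and> (br (e i) ^^ nat (Mn n i j + 1)) (f j) = 0
      \<and> (br (f i) ^^ nat (Mn n i j + 1)) (e j) = 0)"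

(* Matrices: functions nat \<Rightarrow> nat \<Rightarrow> complex, indices 1..N *)
type_synonym cmat = "nat \<Rightarrow> nat \<Rightarrow> complex"

definition Eu :: "nat \<Rightarrow> nat \<Rightarrow> cmat" where
  "Eu p q = (\<lambda>i j. if i = p \<and> j = q then 1 else 0)"

definition msc :: "complex \<Rightarrow> cmat \<Rightarrow> cmat" where
  "msc c A = (\<lambda>i j. c * A i j)"

definition mcomm :: "nat \<Rightarrow> cmat \<Rightarrow> cmat \<Rightarrow> cmat" where
  "mcomm N A B = (\<lambda>i j. (\<Sum>l=1..N. A i l * B l j) - (\<Sum>l=1..N. B i l * A l j))"

definition psi_e :: "complex \<Rightarrow> nat \<Rightarrow> nat \<Rightarrow> cmat" where
  "psi_e a n i = (if i < n then Eu i (i+1) - Eu (n+i+1) (n+i)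
                  else Eu n (n+1) + msc (inverse a) (Eu 1 (2*n)))"

definition psi_f :: "complex \<Rightarrow> nat \<Rightarrow> nat \<Rightarrow> cmat" where
  "psi_f a n i = (if i < n then Eu (i+1) i - Eu (n+i) (n+i+1)
                  else Eu (n+1) n + msc a (Eu (2*n) 1))"

(* K-tuples of matrices: X k i j, k \<in> {1..K}; componentwise operations *)
type_synonym cmats = "nat \<Rightarrow> nat \<Rightarrow> nat \<Rightarrow> complex"

definition tsc :: "complex \<Rightarrow> cmats \<Rightarrow> cmats" where
  "tsc c X = (\<lambda>k i j. c * X k i j)"

definition tbr :: "nat \<Rightarrow> cmats \<Rightarrow> cmats \<Rightarrow> cmats" where
  "tbr n X Y = (\<lambda>k. mcomm (2*n) (X k) (Y k))"

(* psi_{\<underline>a}(x) = (psi_{a_1}(x), ..., psi_{a_K}(x)) on the generators *)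
definition tuple_of :: "nat \<Rightarrow> (nat \<Rightarrow> cmat) \<Rightarrow> cmats" where
  "tuple_of K M = (\<lambda>k. if k \<in> {1..K} then M k else (\<lambda>_ _. 0))"

definition slK :: "nat \<Rightarrow> nat \<Rightarrow> cmats set" where
  "slK n K = {X. (\<forall>k i j. k \<notin> {1..K} \<or> i \<notin> {1..2*n} \<or> j \<notin> {1..2*n} \<longrightarrow> X k i j = 0)
               \<and> (\<forall>k\<in>{1..K}. (\<Sum>i=1..2*n. X k i i) = 0)}"

end

theory Submission
  imports Defs
begin

text \<open>
  Write \<open>X\<^sub>p\<^sub>q(w)\<close> (\<open>tuple_unit K w p q\<close>) for the tuple \<open>(w\<^sub>1 E\<^sub>p\<^sub>q, \<dots>, w\<^sub>K E\<^sub>p\<^sub>q)\<close>, and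
  \<open>comp_unit K k p q\<close> for \<open>E\<^sub>p\<^sub>q\<close> placed in the \<open>k\<close>-th component alone. Iterated brackets of the
  images of \<open>e\<^sub>i, f\<^sub>i\<close> (\<open>i < n\<close>) give \<open>X\<^sub>1\<^sub>n(1) - X\<^sub>2\<^sub>n\<^sub>,\<^sub>n\<^sub>+\<^sub>1(1)\<close> and its transpose, and
  bracketing these with \<open>\<psi>(e\<^sub>n)\<close>, \<open>\<psi>(f\<^sub>n)\<close> produces \<open>X\<^sub>1\<^sub>,\<^sub>n\<^sub>+\<^sub>1(u)\<close> and \<open>X\<^sub>n\<^sub>+\<^sub>1\<^sub>,\<^sub>1(v)\<close> with
  \<open>u\<^sub>k = 1 + a\<^sub>k\<inverse>\<close>, \<open>v\<^sub>k = -(1 + a\<^sub>k)\<close>. Bracketing with their commutator multiplies weights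
  componentwise by \<open>\<plusminus>2u\<^sub>kv\<^sub>k = \<mp>2(2 + a\<^sub>k + a\<^sub>k\<inverse>)\<close>; these numbers are pairwise distinct
  because \<open>a\<^sub>k \<noteq> a\<^sub>j\<^sup>\<plusminus>\<^sup>1\<close>, so Lagrange interpolation isolates single components. Using
  \<open>a\<^sub>k \<noteq> \<plusminus>1\<close> one then reaches \<open>E\<^sub>1\<^sub>,\<^sub>2\<^sub>n\<close> and \<open>E\<^sub>2\<^sub>n\<^sub>,\<^sub>1\<close> in each component, and from these all
  \<open>E\<^sub>p\<^sub>q\<close> (\<open>p \<noteq> q\<close>) and \<open>E\<^sub>p\<^sub>p - E\<^sub>1\<^sub>1\<close>, which span \<open>sl\<^sub>2\<^sub>n\<^sup>\<oplus>\<^sup>K\<close>. Conversely the image lies in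
  \<open>sl\<^sub>2\<^sub>n\<^sup>\<oplus>\<^sup>K\<close> because the generators are traceless and commutators are traceless.
\<close>

definition tuple_unit :: "nat \<Rightarrow> (nat \<Rightarrow> complex) \<Rightarrow> nat \<Rightarrow> nat \<Rightarrow> cmats" where
  "tuple_unit K w p q = (\<lambda>k i j. if k \<in> {1..K} \<and> i = p \<and> j = q then w k else 0)"

definition comp_unit :: "nat \<Rightarrow> nat \<Rightarrow> nat \<Rightarrow> nat \<Rightarrow> cmats" where
  "comp_unit K k0 p q = tuple_unit K (\<lambda>k. if k = k0 then 1 else 0) p q"

lemma tuple_unit_add: "tuple_unit K v p q + tuple_unit K w p q = tuple_unit K (\<lambda>k. v k + w k) p q"
  unfolding tuple_unit_def by (intro ext) auto

lemma tsc_one [simp]: "tsc 1 X = X"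
  unfolding tsc_def by simp

lemma tsc_zero: "tsc 0 X = 0"
  unfolding tsc_def by (intro ext) simp

lemma tsc_diff: "tsc c (X - Y) = tsc c X - tsc c Y"
  unfolding tsc_def by (intro ext) (simp add: algebra_simps)

lemma tsc_inverse_cancel: "c \<noteq> 0 \<Longrightarrow> tsc (inverse c) (tsc c X) = X"
  unfolding tsc_def by (intro ext) simp

lemma sum_apply: "(\<Sum>x\<in>A. f x) k = (\<Sum>x\<in>A. f x k)"
  by (induction A rule: infinite_finite_induct) auto

lemma sum_tsc: "(\<Sum>p\<in>A. tsc (c p) X) = tsc (\<Sum>p\<in>A. c p) X"
  unfolding tsc_def by (intro ext) (simp add: sum_apply sum_distrib_right)

lemma tbr_add_left: "tbr n (X + Y) Z = tbr n X Z + tbr n Y Z"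
  unfolding tbr_def mcomm_def by (intro ext) (simp add: algebra_simps sum.distrib)

lemma tbr_add_right: "tbr n Z (X + Y) = tbr n Z X + tbr n Z Y"
  unfolding tbr_def mcomm_def by (intro ext) (simp add: algebra_simps sum.distrib)

lemma tbr_diff_left: "tbr n (X - Y) Z = tbr n X Z - tbr n Y Z"
  unfolding tbr_def mcomm_def by (intro ext) (simp add: algebra_simps sum_subtractf)

lemma tbr_diff_right: "tbr n Z (X - Y) = tbr n Z X - tbr n Z Y"
  unfolding tbr_def mcomm_def by (intro ext) (simp add: algebra_simps sum_subtractf)

lemma tbr_uminus_left: "tbr n (- X) Z = - tbr n X Z"
  unfolding tbr_def mcomm_def by (intro ext) (simp add: sum_negf)

lemma tbr_uminus_right: "tbr n Z (- X) = - tbr n Z X"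
  unfolding tbr_def mcomm_def by (intro ext) (simp add: sum_negf)

lemma tbr_zero_left: "tbr n 0 Z = 0"
  unfolding tbr_def mcomm_def by (intro ext) simp

lemma tbr_zero_right: "tbr n Z 0 = 0"
  unfolding tbr_def mcomm_def by (intro ext) simp

lemma tbr_tsc_left: "tbr n (tsc c X) Z = tsc c (tbr n X Z)"
  unfolding tbr_def mcomm_def tsc_def by (intro ext) (simp add: algebra_simps sum_distrib_left)

lemma tbr_tsc_right: "tbr n Z (tsc c X) = tsc c (tbr n Z X)"
  unfolding tbr_def mcomm_def tsc_def by (intro ext) (simp add: algebra_simps sum_distrib_left)

lemmas tbr_bilinear = tbr_add_left tbr_add_right tbr_diff_left tbr_diff_right
  tbr_uminus_left tbr_uminus_right tbr_zero_left tbr_zero_right tbr_tsc_left tbr_tsc_right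

lemma tbr_tuple_unit:
  assumes "p \<in> {1..2*n}" "q \<in> {1..2*n}" "r \<in> {1..2*n}" "s \<in> {1..2*n}"
  shows "tbr n (tuple_unit K v p q) (tuple_unit K w r s) =
     (if q = r then tuple_unit K (\<lambda>k. v k * w k) p s else 0)
   - (if s = p then tuple_unit K (\<lambda>k. v k * w k) r q else 0)"
proof (intro ext)
  fix k i j
  have "(\<Sum>l=1..2*n. tuple_unit K v p q k i l * tuple_unit K w r s k l j)
      = (if k \<in> {1..K} \<and> i = p \<and> j = s \<and> q = r then v k * w k else 0)"
   and "(\<Sum>l=1..2*n. tuple_unit K w r s k i l * tuple_unit K v p q k l j)
      = (if k \<in> {1..K} \<and> i = r \<and> j = q \<and> s = p then v k * w k else 0)"
    using assms by (auto simp: tuple_unit_def if_distrib[of "\<lambda>x. x * _"] cong: if_cong)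
  then show "tbr n (tuple_unit K v p q) (tuple_unit K w r s) k i j =
     ((if q = r then tuple_unit K (\<lambda>k. v k * w k) p s else 0)
    - (if s = p then tuple_unit K (\<lambda>k. v k * w k) r q else 0)) k i j"
    unfolding tbr_def mcomm_def by (auto simp: tuple_unit_def)
qed

lemma tbr_comp_unit_tuple_unit:
  assumes "k0 \<in> {1..K}" "p \<in> {1..2*n}" "q \<in> {1..2*n}" "r \<in> {1..2*n}" "s \<in> {1..2*n}"
  shows "tbr n (comp_unit K k0 p q) (tuple_unit K w r s) =
     (if q = r then tsc (w k0) (comp_unit K k0 p s) else 0)
   - (if s = p then tsc (w k0) (comp_unit K k0 r q) else 0)"
  unfolding comp_unit_def using assms
  by (simp add: tbr_tuple_unit) (auto simp: tuple_unit_def tsc_def intro!: ext)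

lemma tbr_comp_unit:
  assumes "k0 \<in> {1..K}" "p \<in> {1..2*n}" "q \<in> {1..2*n}" "r \<in> {1..2*n}" "s \<in> {1..2*n}"
  shows "tbr n (comp_unit K k0 p q) (comp_unit K k0 r s) =
     (if q = r then comp_unit K k0 p s else 0) - (if s = p then comp_unit K k0 r q else 0)"
  using tbr_comp_unit_tuple_unit[OF assms, of "\<lambda>k. if k = k0 then 1 else 0"]
  by (simp add: comp_unit_def)

lemma tbr_tbr_tuple_unit_same:
  assumes "p \<in> {1..2*n}" "q \<in> {1..2*n}" "p \<noteq> q"
  shows "tbr n (tbr n (tuple_unit K u p q) (tuple_unit K v q p)) (tuple_unit K w p q)
       = tuple_unit K (\<lambda>k. 2 * u k * v k * w k) p q"
  using assms by (simp add: tbr_bilinear tbr_tuple_unit) (auto simp: tuple_unit_def intro!: ext)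

lemma tbr_tbr_tuple_unit_opposite:
  assumes "p \<in> {1..2*n}" "q \<in> {1..2*n}" "p \<noteq> q"
  shows "tbr n (tbr n (tuple_unit K u p q) (tuple_unit K v q p)) (tuple_unit K w q p)
       = tuple_unit K (\<lambda>k. -2 * u k * v k * w k) q p"
  using assms by (simp add: tbr_bilinear tbr_tuple_unit) (auto simp: tuple_unit_def intro!: ext)

lemma comp_unit_expansion:
  assumes support: "\<And>k i j. k \<notin> {1..K} \<or> i \<notin> {1..N} \<or> j \<notin> {1..N} \<Longrightarrow> X k i j = 0"
  shows "(\<Sum>k\<in>{1..K}. \<Sum>p\<in>{1..N}. \<Sum>q\<in>{1..N}. tsc (X k p q) (comp_unit K k p q)) = X"
proof (intro ext)
  fix k' i j
  have "(\<Sum>k\<in>{1..K}. \<Sum>p\<in>{1..N}. \<Sum>q\<in>{1..N}. tsc (X k p q) (comp_unit K k p q)) k' i j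
     = (\<Sum>k\<in>{1..K}. \<Sum>p\<in>{1..N}. \<Sum>q\<in>{1..N}. if k = k' \<and> k' \<in> {1..K} \<and> p = i \<and> q = j then X k p q else 0)"
    by (simp add: sum_apply tsc_def comp_unit_def tuple_unit_def) (intro sum.cong refl, auto)
  also have "\<dots> = X k' i j"
  proof (cases "k' \<in> {1..K} \<and> i \<in> {1..N} \<and> j \<in> {1..N}")
    case True
    have "(\<Sum>q\<in>{1..N}. if k = k' \<and> k' \<in> {1..K} \<and> p = i \<and> q = j then X k p q else 0)
        = (if k = k' \<and> p = i then X k' i j else 0)" for k p
      using True by (cases "k = k' \<and> p = i") auto
    moreover have "(\<Sum>p\<in>{1..N}. if k = k' \<and> p = i then X k' i j else 0)
        = (if k = k' then X k' i j else 0)" for k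
      using True by (cases "k = k'") auto
    ultimately show ?thesis
      using True by simp
  next
    case False
    then show ?thesis
      using support by (auto intro!: sum.neutral)
  qed
  finally show "(\<Sum>k\<in>{1..K}. \<Sum>p\<in>{1..N}. \<Sum>q\<in>{1..N}. tsc (X k p q) (comp_unit K k p q)) k' i j = X k' i j" .
qed

lemma add_inverse_eq_iff:
  fixes x y :: "'a::field"
  assumes "x \<noteq> 0" "y \<noteq> 0"
  shows "x + inverse x = y + inverse y \<longleftrightarrow> x = y \<or> x = inverse y"
proof
  assume "x + inverse x = y + inverse y"
  then have "x * x * y + y = y * y * x + x"
    using assms by (simp add: field_simps)
  then have "(x - y) * (x * y - 1) = 0"
    by algebra
  then have "x = y \<or> x * y = 1"
    by simp
  then show "x = y \<or> x = inverse y"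
    using assms by (auto simp: field_simps)
qed (use assms in auto)

locale psi_subalgebra =
  fixes n K :: nat and L :: "cmats set" and a :: "nat \<Rightarrow> complex"
  assumes n_ge_3: "n \<ge> 3"
    and zero_mem: "0 \<in> L"
    and add_mem: "\<And>X Y. X \<in> L \<Longrightarrow> Y \<in> L \<Longrightarrow> X + Y \<in> L"
    and tsc_mem: "\<And>X c. X \<in> L \<Longrightarrow> tsc c X \<in> L"
    and tbr_mem: "\<And>X Y. X \<in> L \<Longrightarrow> Y \<in> L \<Longrightarrow> tbr n X Y \<in> L"
    and e_mem: "\<And>i. 1 \<le> i \<Longrightarrow> i < n \<Longrightarrow>
      tuple_unit K (\<lambda>_. 1) i (i+1) - tuple_unit K (\<lambda>_. 1) (n+i+1) (n+i) \<in> L"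
    and f_mem: "\<And>i. 1 \<le> i \<Longrightarrow> i < n \<Longrightarrow>
      tuple_unit K (\<lambda>_. 1) (i+1) i - tuple_unit K (\<lambda>_. 1) (n+i) (n+i+1) \<in> L"
    and e_n_mem: "tuple_unit K (\<lambda>_. 1) n (n+1) + tuple_unit K (\<lambda>k. inverse (a k)) 1 (2*n) \<in> L"
    and f_n_mem: "tuple_unit K (\<lambda>_. 1) (n+1) n + tuple_unit K a (2*n) 1 \<in> L"
    and a_nonzero: "\<And>k. k \<in> {1..K} \<Longrightarrow> a k \<noteq> 0"
    and a_not_pm1: "\<And>k. k \<in> {1..K} \<Longrightarrow> a k \<noteq> 1 \<and> a k \<noteq> -1"
    and a_distinct: "\<And>k j. k \<in> {1..K} \<Longrightarrow> j \<in> {1..K} \<Longrightarrow> k \<noteq> j \<Longrightarrow>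
      a k \<noteq> a j \<and> a k \<noteq> inverse (a j)"
begin

abbreviation ones :: "nat \<Rightarrow> nat \<Rightarrow> cmats" where
  "ones p q \<equiv> tuple_unit K (\<lambda>_. 1) p q"

lemma uminus_mem: "X \<in> L \<Longrightarrow> - X \<in> L"
proof -
  have "tsc (-1) X = - X"
    unfolding tsc_def by (intro ext) simp
  then show "X \<in> L \<Longrightarrow> - X \<in> L"
    using tsc_mem by metis
qed

lemma diff_mem: "X \<in> L \<Longrightarrow> Y \<in> L \<Longrightarrow> X - Y \<in> L"
  using add_mem uminus_mem by (metis diff_conv_add_uminus)

lemma sum_mem: "finite A \<Longrightarrow> (\<And>x. x \<in> A \<Longrightarrow> F x \<in> L) \<Longrightarrow> sum F A \<in> L"
  by (induction A rule: finite_induct) (auto intro: add_mem zero_mem)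

lemma mem_of_tsc_mem: "tsc c X \<in> L \<Longrightarrow> c \<noteq> 0 \<Longrightarrow> X \<in> L"
  using tsc_mem[of "tsc c X" "inverse c"] by (simp add: tsc_inverse_cancel)

lemma ones_upper_mem: "1 \<le> i \<Longrightarrow> i < j \<Longrightarrow> j \<le> n \<Longrightarrow> ones i j - ones (n+j) (n+i) \<in> L"
proof (induction j)
  case 0
  then show ?case by simp
next
  case (Suc j)
  show ?case
  proof (cases "j = i")
    case True
    then show ?thesis using e_mem[of i] Suc.prems by (simp only: Suc_eq_plus1 add.assoc)
  next
    case False
    then have "ones i j - ones (n+j) (n+i) \<in> L"
      using Suc.prems by (intro Suc.IH) auto
    then have "tbr n (ones i j - ones (n+j) (n+i)) (ones j (j+1) - ones (n+j+1) (n+j)) \<in> L"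
      using tbr_mem e_mem[of j] Suc.prems False by simp
    moreover have "tbr n (ones i j - ones (n+j) (n+i)) (ones j (j+1) - ones (n+j+1) (n+j))
        = ones i (Suc j) - ones (n + Suc j) (n+i)"
      using Suc.prems False n_ge_3 by (simp add: tbr_bilinear tbr_tuple_unit)
    ultimately show ?thesis by (simp only: add_Suc_right)
  qed
qed

lemma ones_lower_mem: "1 \<le> i \<Longrightarrow> i < j \<Longrightarrow> j \<le> n \<Longrightarrow> ones j i - ones (n+i) (n+j) \<in> L"
proof (induction j)
  case 0
  then show ?case by simp
next
  case (Suc j)
  show ?case
  proof (cases "j = i")
    case True
    then show ?thesis using f_mem[of i] Suc.prems by (simp only: Suc_eq_plus1 add.assoc)
  next
    case False
    then have "ones j i - ones (n+i) (n+j) \<in> L"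
      using Suc.prems by (intro Suc.IH) auto
    then have "tbr n (ones (j+1) j - ones (n+j) (n+j+1)) (ones j i - ones (n+i) (n+j)) \<in> L"
      using tbr_mem f_mem[of j] Suc.prems False by simp
    moreover have "tbr n (ones (j+1) j - ones (n+j) (n+j+1)) (ones j i - ones (n+i) (n+j))
        = ones (Suc j) i - ones (n+i) (n + Suc j)"
      using Suc.prems False n_ge_3 by (simp add: tbr_bilinear tbr_tuple_unit)
    ultimately show ?thesis by (simp only: add_Suc_right)
  qed
qed

text \<open>Lagrange interpolation: applying \<open>\<Prod>\<^sub>j\<^sub>\<noteq>\<^sub>k\<^sub>0 (c - c\<^sub>j)\<close> to \<open>X\<^sub>p\<^sub>q(w)\<close> kills every
  component except the \<open>k\<^sub>0\<close>-th.\<close>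

lemma comp_unit_mem_by_interpolation:
  assumes mult: "\<And>w. tuple_unit K w p q \<in> L \<Longrightarrow> tuple_unit K (\<lambda>k. c k * w k) p q \<in> L"
    and w_mem: "tuple_unit K w p q \<in> L" and k0: "k0 \<in> {1..K}" and w_k0: "w k0 \<noteq> 0"
    and c_distinct: "\<And>j. j \<in> {1..K} \<Longrightarrow> j \<noteq> k0 \<Longrightarrow> c j \<noteq> c k0"
  shows "comp_unit K k0 p q \<in> L"
proof -
  define P where "P J k = (\<Prod>j\<in>J. c k - c j) * w k" for J k
  have P_mem: "tuple_unit K (P J) p q \<in> L" if "finite J" for J
    using that
  proof (induction J rule: finite_induct)
    case empty
    then show ?case using w_mem by (simp add: P_def)
  next
    case (insert j J)
    have "tuple_unit K (\<lambda>k. c k * P J k) p q - tsc (c j) (tuple_unit K (P J) p q) \<in> L"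
      using diff_mem mult tsc_mem insert.IH by blast
    moreover have "tuple_unit K (\<lambda>k. c k * P J k) p q - tsc (c j) (tuple_unit K (P J) p q)
        = tuple_unit K (P (insert j J)) p q"
      using insert.hyps unfolding tuple_unit_def tsc_def P_def by (intro ext) (auto simp: algebra_simps)
    ultimately show ?case by simp
  qed
  define J where "J = {1..K} - {k0}"
  have P_J: "P J k = 0" if "k \<in> {1..K}" "k \<noteq> k0" for k
    using that unfolding P_def J_def by auto
  have "c k0 - c j \<noteq> 0" if "j \<in> J" for j
    using c_distinct[of j] that unfolding J_def by auto
  then have "P J k0 \<noteq> 0"
    using w_k0 unfolding P_def J_def by simp
  moreover have "tsc (P J k0) (comp_unit K k0 p q) = tuple_unit K (P J) p q"
    unfolding comp_unit_def tsc_def tuple_unit_def using P_J by (intro ext) auto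
  ultimately show ?thesis
    using mem_of_tsc_mem P_mem[of J] unfolding J_def by force
qed

definition upper_weight :: "nat \<Rightarrow> complex" where
  "upper_weight k = 1 + inverse (a k)"

definition lower_weight :: "nat \<Rightarrow> complex" where
  "lower_weight k = - (1 + a k)"

lemma upper_weight_mem: "tuple_unit K upper_weight 1 (n+1) \<in> L"
proof -
  have "tbr n (ones 1 n - ones (n+n) (n+1)) (ones n (n+1) + tuple_unit K (\<lambda>k. inverse (a k)) 1 (2*n)) \<in> L"
    using tbr_mem[OF ones_upper_mem[of 1 n] e_n_mem] n_ge_3 by simp
  moreover have "tbr n (ones 1 n - ones (n+n) (n+1)) (ones n (n+1) + tuple_unit K (\<lambda>k. inverse (a k)) 1 (2*n))
     = ones 1 (n+1) + tuple_unit K (\<lambda>k. inverse (a k)) 1 (n+1)"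
    using n_ge_3 by (simp add: tbr_bilinear tbr_tuple_unit)
  ultimately show ?thesis
    by (simp add: tuple_unit_add upper_weight_def[abs_def])
qed

lemma lower_weight_mem: "tuple_unit K lower_weight (n+1) 1 \<in> L"
proof -
  have "tbr n (ones n 1 - ones (n+1) (n+n)) (ones (n+1) n + tuple_unit K a (2*n) 1) \<in> L"
    using tbr_mem[OF ones_lower_mem[of 1 n] f_n_mem] n_ge_3 by simp
  moreover have "tbr n (ones n 1 - ones (n+1) (n+n)) (ones (n+1) n + tuple_unit K a (2*n) 1)
     = - ones (n+1) 1 - tuple_unit K a (n+1) 1"
    using n_ge_3 by (simp add: tbr_bilinear tbr_tuple_unit)
  moreover have "- ones (n+1) 1 - tuple_unit K a (n+1) 1 = tuple_unit K lower_weight (n+1) 1"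
    unfolding tuple_unit_def lower_weight_def by (intro ext) auto
  ultimately show ?thesis by simp
qed

lemma weight_products_distinct:
  assumes "k \<in> {1..K}" "j \<in> {1..K}" "j \<noteq> k"
  shows "upper_weight j * lower_weight j \<noteq> upper_weight k * lower_weight k"
proof -
  have product: "upper_weight i * lower_weight i = - (2 + a i + inverse (a i))" if "a i \<noteq> 0" for i
    using that unfolding upper_weight_def lower_weight_def by (simp add: field_simps)
  have "a j + inverse (a j) \<noteq> a k + inverse (a k)"
    using add_inverse_eq_iff[of "a j" "a k"] a_nonzero a_distinct assms by auto
  then show ?thesis
    using product a_nonzero assms by (metis add.assoc add_left_cancel neg_equal_iff_equal)
qed

lemma comp_unit_1_n1_mem:
  assumes k0: "k0 \<in> {1..K}"
  shows "comp_unit K k0 1 (n+1) \<in> L"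
proof (rule comp_unit_mem_by_interpolation[where c = "\<lambda>k. 2 * upper_weight k * lower_weight k",
      OF _ upper_weight_mem k0])
  show "tuple_unit K (\<lambda>k. 2 * upper_weight k * lower_weight k * w k) 1 (n+1) \<in> L"
    if "tuple_unit K w 1 (n+1) \<in> L" for w
    using tbr_mem[OF tbr_mem[OF upper_weight_mem lower_weight_mem] that] n_ge_3
    by (simp add: tbr_tbr_tuple_unit_same)
  show "upper_weight k0 \<noteq> 0"
    using a_nonzero[OF k0] a_not_pm1[OF k0] unfolding upper_weight_def
    by (auto simp: field_simps add_eq_0_iff)
  show "2 * upper_weight j * lower_weight j \<noteq> 2 * upper_weight k0 * lower_weight k0"
    if "j \<in> {1..K}" "j \<noteq> k0" for j
    using weight_products_distinct[OF k0 that] by (simp add: mult.assoc)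
qed

lemma comp_unit_n1_1_mem:
  assumes k0: "k0 \<in> {1..K}"
  shows "comp_unit K k0 (n+1) 1 \<in> L"
proof (rule comp_unit_mem_by_interpolation[where c = "\<lambda>k. -2 * upper_weight k * lower_weight k",
      OF _ lower_weight_mem k0])
  show "tuple_unit K (\<lambda>k. -2 * upper_weight k * lower_weight k * w k) (n+1) 1 \<in> L"
    if "tuple_unit K w (n+1) 1 \<in> L" for w
    using tbr_mem[OF tbr_mem[OF upper_weight_mem lower_weight_mem] that] n_ge_3
    by (simp add: tbr_tbr_tuple_unit_opposite)
  show "lower_weight k0 \<noteq> 0"
    using a_not_pm1[OF k0] unfolding lower_weight_def by (auto simp: add_eq_0_iff)
  show "-2 * upper_weight j * lower_weight j \<noteq> -2 * upper_weight k0 * lower_weight k0"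
    if "j \<in> {1..K}" "j \<noteq> k0" for j
    using weight_products_distinct[OF k0 that] by (simp add: mult.assoc)
qed

context
  fixes k0 assumes k0: "k0 \<in> {1..K}"
begin

abbreviation U :: "nat \<Rightarrow> nat \<Rightarrow> cmats" where
  "U p q \<equiv> comp_unit K k0 p q"

lemmas bracket_rules = tbr_bilinear tbr_comp_unit[OF k0] tbr_comp_unit_tuple_unit[OF k0]

lemma U_1_2n_mem: "U 1 (2*n) \<in> L"
proof -
  have "tbr n (tbr n (U 1 (n+1)) (U (n+1) 1)) (ones n (n+1) + tuple_unit K (\<lambda>k. inverse (a k)) 1 (2*n))
      + tbr n (U 1 (n+1)) (ones n 1 - ones (n+1) (n+n)) \<in> L"
    using n_ge_3 by (intro add_mem tbr_mem comp_unit_1_n1_mem comp_unit_n1_1_mem k0 e_n_mem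
        ones_lower_mem) auto
  moreover have "tbr n (tbr n (U 1 (n+1)) (U (n+1) 1)) (ones n (n+1) + tuple_unit K (\<lambda>k. inverse (a k)) 1 (2*n))
      + tbr n (U 1 (n+1)) (ones n 1 - ones (n+1) (n+n)) = tsc (inverse (a k0) - 1) (U 1 (2*n))"
    using n_ge_3 k0 by (simp add: bracket_rules) (auto simp: comp_unit_def tuple_unit_def tsc_def intro!: ext)
  moreover have "inverse (a k0) - 1 \<noteq> 0"
    using a_not_pm1[OF k0] a_nonzero[OF k0] by (auto simp: field_simps)
  ultimately show ?thesis
    by (metis mem_of_tsc_mem)
qed

lemma U_2n_1_mem: "U (2*n) 1 \<in> L"
proof -
  have "tbr n (tbr n (U 1 (n+1)) (U (n+1) 1)) (ones (n+1) n + tuple_unit K a (2*n) 1)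
      + tbr n (U (n+1) 1) (ones 1 n - ones (n+n) (n+1)) \<in> L"
    using n_ge_3 by (intro add_mem tbr_mem comp_unit_1_n1_mem comp_unit_n1_1_mem k0 f_n_mem
        ones_upper_mem) auto
  moreover have "tbr n (tbr n (U 1 (n+1)) (U (n+1) 1)) (ones (n+1) n + tuple_unit K a (2*n) 1)
      + tbr n (U (n+1) 1) (ones 1 n - ones (n+n) (n+1)) = tsc (1 - a k0) (U (2*n) 1)"
    using n_ge_3 k0 by (simp add: bracket_rules) (auto simp: comp_unit_def tuple_unit_def tsc_def intro!: ext)
  moreover have "1 - a k0 \<noteq> 0"
    using a_not_pm1[OF k0] by auto
  ultimately show ?thesis
    by (metis mem_of_tsc_mem)
qed

lemma U_1_second_half_mem:
  assumes "1 \<le> r" "r \<le> n"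
  shows "U 1 (n+r) \<in> L"
proof (cases "r = n")
  case True
  then show ?thesis using U_1_2n_mem by (simp add: mult_2)
next
  case False
  then have "tbr n (U 1 (2*n)) (ones r n - ones (n+n) (n+r)) \<in> L"
    using tbr_mem[OF U_1_2n_mem ones_upper_mem[of r n]] assms by simp
  moreover have "tbr n (U 1 (2*n)) (ones r n - ones (n+n) (n+r)) = - U 1 (n+r)"
    using n_ge_3 assms False by (simp add: bracket_rules)
  ultimately show ?thesis
    using uminus_mem by fastforce
qed

lemma U_second_half_1_mem:
  assumes "1 \<le> r" "r \<le> n"
  shows "U (n+r) 1 \<in> L"
proof (cases "r = n")
  case True
  then show ?thesis using U_2n_1_mem by (simp add: mult_2)
next
  case False
  then have "tbr n (U (2*n) 1) (ones n r - ones (n+r) (n+n)) \<in> L"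
    using tbr_mem[OF U_2n_1_mem ones_lower_mem[of r n]] assms by simp
  moreover have "tbr n (U (2*n) 1) (ones n r - ones (n+r) (n+n)) = U (n+r) 1"
    using n_ge_3 assms False by (simp add: bracket_rules)
  ultimately show ?thesis by simp
qed

lemma U_2n_first_half_mem:
  assumes "2 \<le> q" "q \<le> n"
  shows "U (2*n) q \<in> L"
proof -
  have "tbr n (U (2*n) 1) (ones 1 q - ones (n+q) (n+1)) \<in> L"
    using tbr_mem[OF U_2n_1_mem ones_upper_mem[of 1 q]] assms by simp
  moreover have "tbr n (U (2*n) 1) (ones 1 q - ones (n+q) (n+1)) = U (2*n) q"
    using n_ge_3 assms by (simp add: bracket_rules)
  ultimately show ?thesis by simp
qed

lemma U_first_half_2n_mem:
  assumes "2 \<le> q" "q \<le> n"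
  shows "U q (2*n) \<in> L"
proof -
  have "tbr n (U 1 (2*n)) (ones q 1 - ones (n+1) (n+q)) \<in> L"
    using tbr_mem[OF U_1_2n_mem ones_lower_mem[of 1 q]] assms by simp
  moreover have "tbr n (U 1 (2*n)) (ones q 1 - ones (n+1) (n+q)) = - U q (2*n)"
    using n_ge_3 assms by (simp add: bracket_rules)
  ultimately show ?thesis
    using uminus_mem by fastforce
qed

lemma U_1_first_half_mem:
  assumes "2 \<le> q" "q \<le> n"
  shows "U 1 q \<in> L"
proof -
  have "tbr n (U 1 (2*n)) (U (2*n) q) = U 1 q"
    using n_ge_3 assms by (simp add: bracket_rules)
  then show ?thesis
    using tbr_mem[OF U_1_2n_mem U_2n_first_half_mem[OF assms]] by simp
qed

lemma U_first_half_1_mem: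
  assumes "2 \<le> q" "q \<le> n"
  shows "U q 1 \<in> L"
proof -
  have "tbr n (U q (2*n)) (U (2*n) 1) = U q 1"
    using n_ge_3 assms by (simp add: bracket_rules)
  then show ?thesis
    using tbr_mem[OF U_first_half_2n_mem[OF assms] U_2n_1_mem] by simp
qed

lemma U_first_row_column_mem:
  assumes "2 \<le> q" "q \<le> 2*n"
  shows "U 1 q \<in> L \<and> U q 1 \<in> L"
proof (cases "q \<le> n")
  case True
  then show ?thesis
    using U_1_first_half_mem U_first_half_1_mem assms by simp
next
  case False
  then have "q = n + (q - n)" "1 \<le> q - n" "q - n \<le> n"
    using assms by auto
  then show ?thesis
    using U_1_second_half_mem U_second_half_1_mem by metis
qed

lemma U_off_diagonal_mem:
  assumes "p \<in> {1..2*n}" "q \<in> {1..2*n}" "p \<noteq> q"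
  shows "U p q \<in> L"
proof (cases "p = 1 \<or> q = 1")
  case True
  then show ?thesis using U_first_row_column_mem assms by auto
next
  case False
  then have "tbr n (U p 1) (U 1 q) \<in> L"
    using U_first_row_column_mem assms tbr_mem by auto
  moreover have "tbr n (U p 1) (U 1 q) = U p q"
    using assms n_ge_3 False by (simp add: bracket_rules)
  ultimately show ?thesis by simp
qed

lemma U_diagonal_diff_mem:
  assumes "p \<in> {1..2*n}"
  shows "U p p - U 1 1 \<in> L"
proof (cases "p = 1")
  case True
  then show ?thesis using zero_mem by simp
next
  case False
  then have "tbr n (U p 1) (U 1 p) \<in> L"
    using U_first_row_column_mem assms tbr_mem by auto
  moreover have "tbr n (U p 1) (U 1 p) = U p p - U 1 1"
    using assms n_ge_3 False by (simp add: bracket_rules)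
  ultimately show ?thesis by simp
qed

end

lemma slK_subset: "slK n K \<subseteq> L"
proof
  fix X assume X: "X \<in> slK n K"
  define Y where "Y k = (\<Sum>p\<in>{1..2*n}. (\<Sum>q\<in>{1..2*n}-{p}. tsc (X k p q) (comp_unit K k p q))
      + tsc (X k p p) (comp_unit K k p p - comp_unit K k 1 1))" for k
  have "Y k \<in> L" if "k \<in> {1..K}" for k
    unfolding Y_def
    by (intro sum_mem add_mem tsc_mem U_off_diagonal_mem[OF that] U_diagonal_diff_mem[OF that]) auto
  moreover have "Y k = (\<Sum>p\<in>{1..2*n}. \<Sum>q\<in>{1..2*n}. tsc (X k p q) (comp_unit K k p q))"
    if "k \<in> {1..K}" for k
  proof -
    have "Y k = (\<Sum>p\<in>{1..2*n}. (\<Sum>q\<in>{1..2*n}. tsc (X k p q) (comp_unit K k p q))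
        - tsc (X k p p) (comp_unit K k 1 1))"
      unfolding Y_def
    proof (intro sum.cong refl)
      fix p assume "p \<in> {1..2*n}"
      then have "(\<Sum>q\<in>{1..2*n}. tsc (X k p q) (comp_unit K k p q))
          = tsc (X k p p) (comp_unit K k p p) + (\<Sum>q\<in>{1..2*n}-{p}. tsc (X k p q) (comp_unit K k p q))"
        by (intro sum.remove) auto
      then show "(\<Sum>q\<in>{1..2*n}-{p}. tsc (X k p q) (comp_unit K k p q))
          + tsc (X k p p) (comp_unit K k p p - comp_unit K k 1 1)
        = (\<Sum>q\<in>{1..2*n}. tsc (X k p q) (comp_unit K k p q)) - tsc (X k p p) (comp_unit K k 1 1)"
        by (simp add: tsc_diff algebra_simps)
    qed
    also have "\<dots> = (\<Sum>p\<in>{1..2*n}. \<Sum>q\<in>{1..2*n}. tsc (X k p q) (comp_unit K k p q))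
        - tsc (\<Sum>p\<in>{1..2*n}. X k p p) (comp_unit K k 1 1)"
      by (simp add: sum_subtractf sum_tsc)
    also have "(\<Sum>p\<in>{1..2*n}. X k p p) = 0"
      using X that unfolding slK_def by auto
    finally show ?thesis
      by (simp add: tsc_zero)
  qed
  ultimately have "(\<Sum>k\<in>{1..K}. \<Sum>p\<in>{1..2*n}. \<Sum>q\<in>{1..2*n}. tsc (X k p q) (comp_unit K k p q)) \<in> L"
    by (metis (no_types, lifting) sum.cong sum_mem finite_atLeastAtMost)
  moreover have "(\<Sum>k\<in>{1..K}. \<Sum>p\<in>{1..2*n}. \<Sum>q\<in>{1..2*n}. tsc (X k p q) (comp_unit K k p q)) = X"
    using X unfolding slK_def by (intro comp_unit_expansion) blast
  ultimately show "X \<in> L"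
    by simp
qed

end

lemma slK_zero: "0 \<in> slK n K"
  unfolding slK_def by auto

lemma slK_add: "X \<in> slK n K \<Longrightarrow> Y \<in> slK n K \<Longrightarrow> X + Y \<in> slK n K"
  unfolding slK_def by (auto simp: sum.distrib)

lemma slK_diff: "X \<in> slK n K \<Longrightarrow> Y \<in> slK n K \<Longrightarrow> X - Y \<in> slK n K"
  unfolding slK_def by (auto simp: sum_subtractf)

lemma slK_tsc: "X \<in> slK n K \<Longrightarrow> tsc c X \<in> slK n K"
  unfolding slK_def tsc_def by (auto simp: sum_distrib_left[symmetric])

lemma slK_tuple_unit: "p \<in> {1..2*n} \<Longrightarrow> q \<in> {1..2*n} \<Longrightarrow> p \<noteq> q \<Longrightarrow> tuple_unit K w p q \<in> slK n K"
  unfolding slK_def tuple_unit_def by (auto intro!: sum.neutral)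

lemma slK_tbr:
  assumes X: "X \<in> slK n K" and Y: "Y \<in> slK n K"
  shows "tbr n X Y \<in> slK n K"
proof -
  have outside: "X k i j = 0" "Y k i j = 0"
    if "k \<notin> {1..K} \<or> i \<notin> {1..2*n} \<or> j \<notin> {1..2*n}" for k i j
    using X Y that unfolding slK_def by blast+
  have "(\<Sum>i=1..2*n. \<Sum>l=1..2*n. X k i l * Y k l i) = (\<Sum>i=1..2*n. \<Sum>l=1..2*n. Y k i l * X k l i)" for k
    by (subst sum.swap) (simp add: mult.commute)
  then show ?thesis
    unfolding slK_def tbr_def mcomm_def
    by (auto simp: outside sum_subtractf intro!: sum.neutral)
qed

lemma tuple_of_psi_e:
  assumes "1 \<le> i" "i < n"
  shows "tuple_of K (\<lambda>k. psi_e (a k) n i)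
     = tuple_unit K (\<lambda>_. 1) i (i+1) - tuple_unit K (\<lambda>_. 1) (n+i+1) (n+i)"
  using assms unfolding tuple_of_def psi_e_def Eu_def tuple_unit_def by (intro ext) auto

lemma tuple_of_psi_f:
  assumes "1 \<le> i" "i < n"
  shows "tuple_of K (\<lambda>k. psi_f (a k) n i)
     = tuple_unit K (\<lambda>_. 1) (i+1) i - tuple_unit K (\<lambda>_. 1) (n+i) (n+i+1)"
  using assms unfolding tuple_of_def psi_f_def Eu_def tuple_unit_def by (intro ext) auto

lemma tuple_of_psi_e_n:
  assumes "2 \<le> n"
  shows "tuple_of K (\<lambda>k. psi_e (a k) n n)
     = tuple_unit K (\<lambda>_. 1) n (n+1) + tuple_unit K (\<lambda>k. inverse (a k)) 1 (2*n)"
  using assms unfolding tuple_of_def psi_e_def Eu_def tuple_unit_def msc_def by (intro ext) auto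

lemma tuple_of_psi_f_n:
  assumes "2 \<le> n"
  shows "tuple_of K (\<lambda>k. psi_f (a k) n n)
     = tuple_unit K (\<lambda>_. 1) (n+1) n + tuple_unit K a (2*n) 1"
  using assms unfolding tuple_of_def psi_f_def Eu_def tuple_unit_def msc_def by (intro ext) auto

lemma tuple_of_psi_slK:
  assumes "2 \<le> n" "i \<in> {1..n}"
  shows "tuple_of K (\<lambda>k. psi_e (a k) n i) \<in> slK n K" "tuple_of K (\<lambda>k. psi_f (a k) n i) \<in> slK n K"
proof -
  have "(tuple_of K (\<lambda>k. psi_e (a k) n i) \<in> slK n K) \<and> (tuple_of K (\<lambda>k. psi_f (a k) n i) \<in> slK n K)"
  proof (cases "i = n")
    case True
    then show ?thesis
      using assms by (auto simp: tuple_of_psi_e_n tuple_of_psi_f_n intro!: slK_add slK_tuple_unit)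
  next
    case False
    then show ?thesis
      using assms by (auto simp: tuple_of_psi_e tuple_of_psi_f intro!: slK_diff slK_tuple_unit)
  qed
  then show "tuple_of K (\<lambda>k. psi_e (a k) n i) \<in> slK n K" "tuple_of K (\<lambda>k. psi_f (a k) n i) \<in> slK n K"
    by auto
qed

lemma lie_generated_subset:
  assumes "S \<subseteq> V" "0 \<in> V" "\<And>x y. x \<in> V \<Longrightarrow> y \<in> V \<Longrightarrow> x + y \<in> V"
    "\<And>c x. x \<in> V \<Longrightarrow> sc c x \<in> V" "\<And>x y. x \<in> V \<Longrightarrow> y \<in> V \<Longrightarrow> br x y \<in> V"
  shows "lie_generated sc br S \<subseteq> V"
  unfolding lie_generated_def by (rule Inter_lower) (use assms in simp)

lemma additive_zero:
  fixes psi :: "'a::ab_group_add \<Rightarrow> 'b::ab_group_add"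
  assumes "\<forall>x y. psi (x + y) = psi x + psi y"
  shows "psi 0 = 0"
proof -
  have "psi 0 = psi 0 + psi 0"
    using assms by (metis add_0)
  then show ?thesis
    by simp
qed

lemma image_lie_generated_subset:
  fixes psi :: "'g::ab_group_add \<Rightarrow> cmats"
  assumes add: "\<forall>x y. psi (x + y) = psi x + psi y"
    and scale: "\<forall>c x. psi (sc c x) = tsc c (psi x)"
    and bracket: "\<forall>x y. psi (br x y) = tbr n (psi x) (psi y)"
    and "psi ` S \<subseteq> W" "0 \<in> W" "\<And>X Y. X \<in> W \<Longrightarrow> Y \<in> W \<Longrightarrow> X + Y \<in> W"
    "\<And>c X. X \<in> W \<Longrightarrow> tsc c X \<in> W" "\<And>X Y. X \<in> W \<Longrightarrow> Y \<in> W \<Longrightarrow> tbr n X Y \<in> W"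
  shows "psi ` lie_generated sc br S \<subseteq> W"
proof -
  have "lie_generated sc br S \<subseteq> psi -` W"
  proof (rule lie_generated_subset)
    show "S \<subseteq> psi -` W" "0 \<in> psi -` W"
      using assms(4,5) additive_zero[OF add] by auto
    show "x + y \<in> psi -` W" "br x y \<in> psi -` W" if "x \<in> psi -` W" "y \<in> psi -` W" for x y
      using that assms(6,8) add bracket by simp_all
    show "sc c x \<in> psi -` W" if "x \<in> psi -` W" for c x
      using that assms(7) scale by simp
  qed
  then show ?thesis
    by blast
qed

lemma range_psi_subalgebra:
  fixes psi :: "'g::ab_group_add \<Rightarrow> cmats"
  assumes "n \<ge> 3"
    and "\<forall>k\<in>{1..K}. a k \<noteq> 0"
    and "\<forall>k\<in>{1..K}. \<forall>j\<in>{1..K}. k \<noteq> j \<longrightarrow> a k \<noteq> a j \<and> a k \<noteq> inverse (a j)"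
    and "\<forall>k\<in>{1..K}. a k \<noteq> 1 \<and> a k \<noteq> -1"
    and add: "\<forall>x y. psi (x + y) = psi x + psi y"
    and scale: "\<forall>c x. psi (sc c x) = tsc c (psi x)"
    and bracket: "\<forall>x y. psi (br x y) = tbr n (psi x) (psi y)"
    and e: "\<forall>i\<in>{1..n}. psi (e i) = tuple_of K (\<lambda>k. psi_e (a k) n i)"
    and f: "\<forall>i\<in>{1..n}. psi (f i) = tuple_of K (\<lambda>k. psi_f (a k) n i)"
  shows "psi_subalgebra n K (range psi) a"
proof
  show "tuple_unit K (\<lambda>_. 1) i (i+1) - tuple_unit K (\<lambda>_. 1) (n+i+1) (n+i) \<in> range psi"
    "tuple_unit K (\<lambda>_. 1) (i+1) i - tuple_unit K (\<lambda>_. 1) (n+i) (n+i+1) \<in> range psi"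
    if "1 \<le> i" "i < n" for i
    using rangeI[of psi "e i"] rangeI[of psi "f i"] e f that
    by (simp_all add: tuple_of_psi_e tuple_of_psi_f)
  show "tuple_unit K (\<lambda>_. 1) n (n+1) + tuple_unit K (\<lambda>k. inverse (a k)) 1 (2*n) \<in> range psi"
    "tuple_unit K (\<lambda>_. 1) (n+1) n + tuple_unit K a (2*n) 1 \<in> range psi"
    using rangeI[of psi "e n"] rangeI[of psi "f n"] e f \<open>n \<ge> 3\<close>
    by (simp_all add: tuple_of_psi_e_n tuple_of_psi_f_n)
  show "0 \<in> range psi"
    using additive_zero[OF add] by (metis rangeI)
  show "X + Y \<in> range psi" "tbr n X Y \<in> range psi" if "X \<in> range psi" "Y \<in> range psi" for X Y
    using that add bracket by (auto simp flip: add bracket)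
  show "tsc c X \<in> range psi" if "X \<in> range psi" for X c
    using that scale by (auto simp flip: scale)
qed (use assms in auto)

theorem lemma5p1:
  fixes n K :: nat and a :: "nat \<Rightarrow> complex"
    and sc :: "complex \<Rightarrow> 'g::ab_group_add \<Rightarrow> 'g" and br :: "'g \<Rightarrow> 'g \<Rightarrow> 'g"
    and e f h :: "nat \<Rightarrow> 'g" and psi :: "'g \<Rightarrow> cmats"
  assumes "n \<ge> 3" and "K \<ge> 1"
    and "\<forall>k\<in>{1..K}. a k \<noteq> 0"
    and "\<forall>k\<in>{1..K}. \<forall>j\<in>{1..K}. k \<noteq> j \<longrightarrow> a k \<noteq> a j \<and> a k \<noteq> inverse (a j)"
    and "\<forall>k\<in>{1..K}. a k \<noteq> 1 \<and> a k \<noteq> -1"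
    and "lie_algebra sc br"
    and "gim_relations n sc br e f h"
    and "lie_generated sc br (e ` {1..n} \<union> f ` {1..n} \<union> h ` {1..n}) = UNIV"
    and "\<forall>x y. psi (x + y) = psi x + psi y"
    and "\<forall>c x. psi (sc c x) = tsc c (psi x)"
    and "\<forall>x y. psi (br x y) = tbr n (psi x) (psi y)"
    and "\<forall>i\<in>{1..n}. psi (e i) = tuple_of K (\<lambda>k. psi_e (a k) n i)"
    and "\<forall>i\<in>{1..n}. psi (f i) = tuple_of K (\<lambda>k. psi_f (a k) n i)"
  shows "range psi = slK n K"
proof
  have "psi (e i) \<in> slK n K \<and> psi (f i) \<in> slK n K \<and> psi (h i) \<in> slK n K" if "i \<in> {1..n}" for i
  proof -
    have "h i = br (e i) (f i)"
      using assms(7) that unfolding gim_relations_def by auto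
    then show ?thesis
      using assms(1,11-13) tuple_of_psi_slK[of n] that by (simp add: slK_tbr)
  qed
  then have "psi ` (e ` {1..n} \<union> f ` {1..n} \<union> h ` {1..n}) \<subseteq> slK n K"
    by auto
  then show "range psi \<subseteq> slK n K"
    using image_lie_generated_subset[OF assms(9-11)] assms(8)
    by (metis slK_zero slK_add slK_tsc slK_tbr)
  show "slK n K \<subseteq> range psi"
    using psi_subalgebra.slK_subset[OF range_psi_subalgebra] assms by blast
qed

end
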